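(* Let $n\ge 1$, $d\ge 1$ and $R=\mathbb{C}[x_0,\dots,x_n]$. A tuple $(f_{ij}: 0\le i<j\le n)\in R_d^{\binom{n+1}{2}}$ is the tuple of determinantal equations of the eigenscheme of a partially symmetric tensor, i.e. there exist $g_0,\dots,g_n\in R_{d-1}$ with $f_{ij}=x_ig_j-x_jg_i$ for all $0\le i<j\le n$, if and only if $$x_if_{jk}-x_jf_{ik}+x_kf_{ij}=0\quad\text{for every }0\le i<j<k\le n.$$
   Context: A partially symmetric tensor is identified with a tuple $T=(g_0,\dots,g_n)$ of homogeneous polynomials $g_i\in\mathbb{C}[x_0,\dots,x_n]_{d-1}$; the determinantal equations of its eigenscheme $E(T)$ are the $2\times 2$ minors $x_ig_j-x_jg_i$ ($0\le i<j\le n$) of the matrix $\begin{pmatrix} x_0&\dots&x_n\\ g_0&\dots&g_n\end{pmatrix}$. *)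

theory Defs
  imports Complex_Main "HOL-Library.Poly_Mapping"
begin

text \<open>Multivariate polynomials over the complex numbers: finitely supported maps from
  monomials (exponent vectors, finitely supported maps nat to nat) to coefficients.\<close>

type_synonym mpoly = "(nat \<Rightarrow>\<^sub>0 nat) \<Rightarrow>\<^sub>0 complex"

definition Var :: "nat \<Rightarrow> mpoly" where
  "Var i = Poly_Mapping.single (Poly_Mapping.single i 1) 1"

definition mon_deg :: "(nat \<Rightarrow>\<^sub>0 nat) \<Rightarrow> nat" where
  "mon_deg m = (\<Sum>i\<in>Poly_Mapping.keys m. Poly_Mapping.lookup m i)"

text \<open>R_d for R = C[x_0,...,x_n]: homogeneous polynomials of degree d in the variables
  x_0,...,x_n (the zero polynomial included).\<close>
definition hom_comp :: "nat \<Rightarrow> nat \<Rightarrow> mpoly set" where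
  "hom_comp n d = {p. \<forall>m\<in>Poly_Mapping.keys p. Poly_Mapping.keys m \<subseteq> {0..n} \<and> mon_deg m = d}"

end

theory Submission imports Defs begin

text \<open>The forward direction is a ring identity (the expansion of a 3 x 3 determinant with two
  equal rows). For the converse, extend f antisymmetrically to F. Differentiating the syzygy
  x_i F_jk + x_j F_ki + x_k F_ij = 0 with respect to x_k and summing over k, Euler's formula
  turns the last term into d F_ij, and one gets (n + d - 1) F_ij = x_i G_j - x_j G_i with
  G_j = \<Sum>_k \<partial>_k F_kj. Since n + d - 1 > 0, g = G / (n + d - 1) works.\<close>

abbreviation var_exp :: "nat \<Rightarrow> (nat \<Rightarrow>\<^sub>0 nat)" where
  "var_exp k \<equiv> Poly_Mapping.single k 1"

lemma var_exp_add_diff: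
  assumes "1 \<le> Poly_Mapping.lookup m k"
  shows "var_exp k + (m - var_exp k) = m"
  by (rule poly_mapping_eqI) (use assms in \<open>auto simp: lookup_add lookup_minus lookup_single when_def\<close>)

lemma eq_var_exp_add_iff:
  "m = var_exp k + q \<longleftrightarrow> 1 \<le> Poly_Mapping.lookup m k \<and> q = m - var_exp k"
  using var_exp_add_diff[of m k] by (auto simp: lookup_add lookup_single)

lemma lookup_Var_mult:
  "Poly_Mapping.lookup (Var k * p) m =
    (if 1 \<le> Poly_Mapping.lookup m k then Poly_Mapping.lookup p (m - var_exp k) else 0)"
proof -
  have "Poly_Mapping.lookup (Var k * p) m = (\<Sum>q. Poly_Mapping.lookup p q when m = var_exp k + q)"
    unfolding Var_def lookup_mult by (simp add: lookup_single when_mult)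
  also have "\<dots> = (\<Sum>q. Poly_Mapping.lookup p q
      when 1 \<le> Poly_Mapping.lookup m k \<and> q = m - var_exp k)"
    by (simp only: eq_var_exp_add_iff)
  finally show ?thesis
    by (simp add: when_def)
qed

lemma lookup_single_0_mult:
  "Poly_Mapping.lookup (Poly_Mapping.single 0 c * p) m = c * Poly_Mapping.lookup p m"
  by (simp add: lookup_mult lookup_single when_mult mult_when)

definition partial_deriv :: "nat \<Rightarrow> mpoly \<Rightarrow> mpoly" where
  "partial_deriv k p = Abs_poly_mapping
     (\<lambda>m. of_nat (Poly_Mapping.lookup m k + 1) * Poly_Mapping.lookup p (m + var_exp k))"

lemma lookup_partial_deriv:
  "Poly_Mapping.lookup (partial_deriv k p) m =
    of_nat (Poly_Mapping.lookup m k + 1) * Poly_Mapping.lookup p (m + var_exp k)"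
proof -
  have "{m. Poly_Mapping.lookup p (m + var_exp k) \<noteq> 0}
      \<subseteq> (\<lambda>q. q - var_exp k) ` Poly_Mapping.keys p"
    by (force simp: in_keys_iff)
  then have "finite {m. Poly_Mapping.lookup p (m + var_exp k) \<noteq> 0}"
    by (rule finite_subset) simp
  then show ?thesis
    unfolding partial_deriv_def by simp
qed

lemma partial_deriv_add: "partial_deriv k (p + q) = partial_deriv k p + partial_deriv k q"
  by (rule poly_mapping_eqI) (simp add: lookup_partial_deriv lookup_add algebra_simps)

lemma partial_deriv_uminus: "partial_deriv k (- p) = - partial_deriv k p"
  by (rule poly_mapping_eqI) (simp add: lookup_partial_deriv)

lemma partial_deriv_zero [simp]: "partial_deriv k 0 = 0"
  by (rule poly_mapping_eqI) (simp add: lookup_partial_deriv)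

lemma partial_deriv_Var_mult:
  "partial_deriv k (Var i * p) = (if i = k then p else 0) + Var i * partial_deriv k p"
proof (rule poly_mapping_eqI)
  fix m
  have shift: "m + var_exp k - var_exp i = m - var_exp i + var_exp k"
    if "i \<noteq> k" "1 \<le> Poly_Mapping.lookup m i"
    by (rule poly_mapping_eqI) (use that in \<open>auto simp: lookup_add lookup_single lookup_minus when_def\<close>)
  have "m - var_exp k + var_exp k = m" if "1 \<le> Poly_Mapping.lookup m k"
    using var_exp_add_diff[OF that] by (simp add: add.commute)
  with shift show "Poly_Mapping.lookup (partial_deriv k (Var i * p)) m =
      Poly_Mapping.lookup ((if i = k then p else 0) + Var i * partial_deriv k p) m"
    by (cases "i = k")
      (auto simp: lookup_partial_deriv lookup_add lookup_Var_mult lookup_single lookup_minus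
        when_def distrib_right)
qed

lemma mon_deg_eq_sum:
  assumes "finite S" "Poly_Mapping.keys m \<subseteq> S"
  shows "mon_deg m = (\<Sum>i\<in>S. Poly_Mapping.lookup m i)"
  unfolding mon_deg_def by (rule sum.mono_neutral_left) (use assms in \<open>auto simp: in_keys_iff\<close>)

lemma hom_comp_iff:
  "p \<in> hom_comp n d \<longleftrightarrow> (\<forall>m. Poly_Mapping.lookup p m \<noteq> 0 \<longrightarrow>
     Poly_Mapping.keys m \<subseteq> {0..n} \<and> mon_deg m = d)"
  unfolding hom_comp_def by (auto simp: in_keys_iff)

lemma euler_hom_comp:
  assumes "p \<in> hom_comp n d"
  shows "(\<Sum>k\<le>n. Var k * partial_deriv k p) = of_nat d * p"
proof (rule poly_mapping_eqI)
  fix m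
  have "Poly_Mapping.lookup (\<Sum>k\<le>n. Var k * partial_deriv k p) m =
      (\<Sum>k\<le>n. of_nat (Poly_Mapping.lookup m k)) * Poly_Mapping.lookup p m"
    unfolding lookup_sum sum_distrib_right
  proof (rule sum.cong[OF refl])
    fix k
    have "m - var_exp k + var_exp k = m" if "1 \<le> Poly_Mapping.lookup m k"
      using var_exp_add_diff[OF that] by (simp add: add.commute)
    then show "Poly_Mapping.lookup (Var k * partial_deriv k p) m =
        of_nat (Poly_Mapping.lookup m k) * Poly_Mapping.lookup p m"
      by (auto simp: lookup_Var_mult lookup_partial_deriv lookup_minus)
  qed
  also have "\<dots> = of_nat d * Poly_Mapping.lookup p m"
  proof (cases "Poly_Mapping.lookup p m = 0")
    case False
    with assms have "Poly_Mapping.keys m \<subseteq> {0..n}" "mon_deg m = d"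
      unfolding hom_comp_iff by auto
    then have "(\<Sum>k\<le>n. Poly_Mapping.lookup m k) = d"
      using mon_deg_eq_sum[of "{..n}" m] by (auto simp: atLeast0AtMost)
    then show ?thesis
      by (metis of_nat_sum)
  qed simp
  finally show "Poly_Mapping.lookup (\<Sum>k\<le>n. Var k * partial_deriv k p) m =
      Poly_Mapping.lookup (of_nat d * p) m"
    by (simp flip: single_of_nat add: lookup_single_0_mult)
qed

lemma hom_comp_add: "p \<in> hom_comp n d \<Longrightarrow> q \<in> hom_comp n d \<Longrightarrow> p + q \<in> hom_comp n d"
  unfolding hom_comp_iff by (metis add.right_neutral add_0 lookup_add)

lemma hom_comp_uminus: "p \<in> hom_comp n d \<Longrightarrow> - p \<in> hom_comp n d"
  unfolding hom_comp_iff by simp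

lemma hom_comp_zero: "0 \<in> hom_comp n d"
  unfolding hom_comp_iff by simp

lemma hom_comp_single_0_mult: "p \<in> hom_comp n d \<Longrightarrow> Poly_Mapping.single 0 c * p \<in> hom_comp n d"
  unfolding hom_comp_iff by (simp add: lookup_single_0_mult)

lemma hom_comp_sum: "(\<And>x. x \<in> A \<Longrightarrow> P x \<in> hom_comp n d) \<Longrightarrow> sum P A \<in> hom_comp n d"
  by (induction A rule: infinite_finite_induct) (auto intro: hom_comp_add hom_comp_zero)

lemma mon_deg_add_var_exp: "mon_deg (m + var_exp k) = mon_deg m + 1"
proof -
  let ?S = "Poly_Mapping.keys m \<union> {k}"
  have "mon_deg (m + var_exp k) = (\<Sum>i\<in>?S. Poly_Mapping.lookup (m + var_exp k) i)"
    by (rule mon_deg_eq_sum) (auto simp: in_keys_iff lookup_add lookup_single when_def split: if_splits)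
  also have "\<dots> = (\<Sum>i\<in>?S. Poly_Mapping.lookup m i) + (\<Sum>i\<in>?S. Poly_Mapping.lookup (var_exp k) i)"
    by (simp add: lookup_add sum.distrib)
  also have "(\<Sum>i\<in>?S. Poly_Mapping.lookup m i) = mon_deg m"
    by (rule mon_deg_eq_sum[symmetric]) auto
  finally show ?thesis
    by (simp add: lookup_single when_def)
qed

lemma hom_comp_partial_deriv:
  assumes "p \<in> hom_comp n d"
  shows "partial_deriv k p \<in> hom_comp n (d - 1)"
  unfolding hom_comp_iff
proof (intro allI impI)
  fix m
  assume "Poly_Mapping.lookup (partial_deriv k p) m \<noteq> 0"
  then have "Poly_Mapping.lookup p (m + var_exp k) \<noteq> 0"
    by (simp add: lookup_partial_deriv)
  with assms have "Poly_Mapping.keys (m + var_exp k) \<subseteq> {0..n}" "mon_deg (m + var_exp k) = d"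
    unfolding hom_comp_iff by auto
  moreover have "Poly_Mapping.keys m \<subseteq> Poly_Mapping.keys (m + var_exp k)"
    by (auto simp: in_keys_iff lookup_add)
  ultimately show "Poly_Mapping.keys m \<subseteq> {0..n} \<and> mon_deg m = d - 1"
    using mon_deg_add_var_exp[of m k] by auto
qed

lemma antisym_cyclic_eq_minors:
  fixes n :: nat and F :: "nat \<Rightarrow> nat \<Rightarrow> mpoly"
  defines "G j \<equiv> \<Sum>k\<le>n. partial_deriv k (F k j)"
  assumes antisym: "\<And>i j. F j i = - F i j"
    and hom: "\<And>i j. i \<le> n \<Longrightarrow> j \<le> n \<Longrightarrow> F i j \<in> hom_comp n d"
    and cyclic: "\<And>i j k. i \<le> n \<Longrightarrow> j \<le> n \<Longrightarrow> k \<le> n \<Longrightarrow>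
      Var i * F j k + Var j * F k i + Var k * F i j = 0"
    and "i \<le> n" "j \<le> n"
  shows "of_nat (n + 1 + d) * F i j = Var i * G j - Var j * G i + 2 * F i j"
proof -
  have "0 = (\<Sum>k\<le>n. partial_deriv k (Var i * F j k + Var j * F k i + Var k * F i j))"
    using cyclic \<open>i \<le> n\<close> \<open>j \<le> n\<close> by simp
  also have "\<dots> = (\<Sum>k\<le>n. (if i = k then F j k else 0) + (if j = k then F k i else 0))
      + Var i * (\<Sum>k\<le>n. partial_deriv k (F j k)) + Var j * G i
      + of_nat (n + 1) * F i j + (\<Sum>k\<le>n. Var k * partial_deriv k (F i j))"
    by (simp add: G_def partial_deriv_add partial_deriv_Var_mult sum.distrib sum_distrib_left
        algebra_simps)
  also have "(\<Sum>k\<le>n. (if i = k then F j k else 0) + (if j = k then F k i else 0)) = - 2 * F i j"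
    using \<open>i \<le> n\<close> \<open>j \<le> n\<close> antisym[of i j] by (simp add: sum.distrib)
  also have "(\<Sum>k\<le>n. partial_deriv k (F j k)) = - G j"
    unfolding G_def by (simp add: antisym[of _ j] partial_deriv_uminus sum_negf)
  also have "(\<Sum>k\<le>n. Var k * partial_deriv k (F i j)) = of_nat d * F i j"
    using hom \<open>i \<le> n\<close> \<open>j \<le> n\<close> by (simp add: euler_hom_comp)
  finally show ?thesis
    by (simp add: algebra_simps)
qed

lemma minors_syzygy:
  "Var i * (Var j * g k - Var k * g j) - Var j * (Var i * g k - Var k * g i)
     + Var k * (Var i * g j - Var j * g i) = 0"
  by (simp add: algebra_simps)

definition antisym_ext :: "(nat \<Rightarrow> nat \<Rightarrow> 'a::ab_group_add) \<Rightarrow> nat \<Rightarrow> nat \<Rightarrow> 'a" where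
  "antisym_ext f i j = (if i < j then f i j else if j < i then - f j i else 0)"

lemma antisym_ext_antisym: "antisym_ext f j i = - antisym_ext f i j"
  unfolding antisym_ext_def by auto

lemma antisym_ext_cyclic:
  assumes "\<forall>i j k. i < j \<and> j < k \<and> k \<le> n \<longrightarrow> Var i * f j k - Var j * f i k + Var k * f i j = 0"
    and "i \<le> n" "j \<le> n" "k \<le> n"
  shows "Var i * antisym_ext f j k + Var j * antisym_ext f k i + Var k * antisym_ext f i j = 0"
  using assms(1)[rule_format, of i j k] assms(1)[rule_format, of i k j]
    assms(1)[rule_format, of j i k] assms(1)[rule_format, of j k i]
    assms(1)[rule_format, of k i j] assms(1)[rule_format, of k j i] assms(2-4)
  by (auto simp: antisym_ext_def algebra_simps)

lemma syzygies_imp_minors: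
  assumes "n + d \<ge> 2"
    and hom: "\<forall>i j. i < j \<and> j \<le> n \<longrightarrow> f i j \<in> hom_comp n d"
    and syz: "\<forall>i j k. i < j \<and> j < k \<and> k \<le> n \<longrightarrow> Var i * f j k - Var j * f i k + Var k * f i j = 0"
  obtains g where "\<forall>i\<le>n. g i \<in> hom_comp n (d - 1)"
    and "\<forall>i j. i < j \<and> j \<le> n \<longrightarrow> f i j = Var i * g j - Var j * g i"
proof
  define F where "F = antisym_ext f"
  define G where "G j = (\<Sum>k\<le>n. partial_deriv k (F k j))" for j
  define N where "N = n + d - 1"
  define c :: mpoly where "c = Poly_Mapping.single 0 (1 / of_nat N)"
  have "N \<noteq> 0"
    using assms(1) unfolding N_def by simp
  then have c_inverse: "c * of_nat N = 1"
    unfolding c_def by (simp only: mult_single flip: single_of_nat) simp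
  have F_hom: "F i j \<in> hom_comp n d" if "i \<le> n" "j \<le> n" for i j
    using hom that unfolding F_def antisym_ext_def by (auto intro: hom_comp_uminus hom_comp_zero)
  show "\<forall>i\<le>n. c * G i \<in> hom_comp n (d - 1)"
    unfolding c_def G_def
    by (intro allI impI hom_comp_single_0_mult hom_comp_sum hom_comp_partial_deriv F_hom) auto
  show "\<forall>i j. i < j \<and> j \<le> n \<longrightarrow> f i j = Var i * (c * G j) - Var j * (c * G i)"
  proof (intro allI impI)
    fix i j
    assume ij: "i < j \<and> j \<le> n"
    have "of_nat (n + 1 + d) * F i j = Var i * G j - Var j * G i + 2 * F i j"
      unfolding G_def F_def
      using antisym_ext_antisym F_hom antisym_ext_cyclic[OF syz] ij
      by (intro antisym_cyclic_eq_minors) (auto simp: F_def)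
    moreover have "of_nat (n + 1 + d) = of_nat N + (2 :: mpoly)"
      using assms(1) unfolding N_def by (simp flip: of_nat_add)
    ultimately have "of_nat N * F i j = Var i * G j - Var j * G i"
      by (metis add_right_cancel distrib_right)
    then have "F i j = c * (Var i * G j - Var j * G i)"
      by (metis c_inverse mult.assoc mult_1)
    then show "f i j = Var i * (c * G j) - Var j * (c * G i)"
      using ij by (simp add: F_def antisym_ext_def algebra_simps)
  qed
qed

theorem theorem3p1:
  fixes n d :: nat and f :: "nat \<Rightarrow> nat \<Rightarrow> mpoly"
  assumes "n \<ge> 1" and "d \<ge> 1"
    and "\<forall>i j. i < j \<and> j \<le> n \<longrightarrow> f i j \<in> hom_comp n d"
  shows "(\<exists>g :: nat \<Rightarrow> mpoly. (\<forall>i\<le>n. g i \<in> hom_comp n (d - 1)) \<and>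
            (\<forall>i j. i < j \<and> j \<le> n \<longrightarrow> f i j = Var i * g j - Var j * g i))
         \<longleftrightarrow> (\<forall>i j k. i < j \<and> j < k \<and> k \<le> n \<longrightarrow>
            Var i * f j k - Var j * f i k + Var k * f i j = 0)"
proof
  assume "\<exists>g. (\<forall>i\<le>n. g i \<in> hom_comp n (d - 1)) \<and>
    (\<forall>i j. i < j \<and> j \<le> n \<longrightarrow> f i j = Var i * g j - Var j * g i)"
  then show "\<forall>i j k. i < j \<and> j < k \<and> k \<le> n \<longrightarrow> Var i * f j k - Var j * f i k + Var k * f i j = 0"
    by (auto simp: minors_syzygy)
next
  assume "\<forall>i j k. i < j \<and> j < k \<and> k \<le> n \<longrightarrow> Var i * f j k - Var j * f i k + Var k * f i j = 0"
  with assms show "\<exists>g. (\<forall>i\<le>n. g i \<in> hom_comp n (d - 1)) \<and>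
    (\<forall>i j. i < j \<and> j \<le> n \<longrightarrow> f i j = Var i * g j - Var j * g i)"
    by (metis add_mono one_add_one syzygies_imp_minors)
qed

end
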